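(* Let $G$ be a finite abelian group which is either cyclic or a direct product of two cyclic groups. Then every normalized $3$-cocycle on $G$ (with values in $\mathbbm{k}^*$) is abelian.
   Context: $\mathbbm{k}$ is algebraically closed of characteristic zero. For a normalized 3-cocycle $\Phi$ on $G$ and $g\in G$, $\widetilde{\Phi}_g(x,y)=\frac{\Phi(g,x,y)\Phi(x,y,g)}{\Phi(x,g,y)}$. The category ${}^{\mathbbm{k}G}_{\mathbbm{k}G}\mathcal{YD}^{\Phi}$ has objects the $G$-graded vector spaces $V=\bigoplus_gV_g$ with operators $e\triangleright-$ ($e\in G$) preserving each $V_g$, $1\triangleright v=v$, and $e\triangleright(f\triangleright v)=\widetilde{\Phi}_g(e,f)(ef)\triangleright v$ for $v\in V_g$; morphisms are graded maps commuting with the actions. $\Phi$ is called abelian if every simple object of ${}^{\mathbbm{k}G}_{\mathbbm{k}G}\mathcal{YD}^{\Phi}$ is $1$-dimensional. *)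

theory Defs
  imports "HOL-Algebra.Elementary_Groups" "HOL-Computational_Algebra.Polynomial"
begin

definition alg_closed_field :: "'k::field itself \<Rightarrow> bool" where
  "alg_closed_field _ \<longleftrightarrow> (\<forall>p::'k poly. degree p \<ge> 1 \<longrightarrow> (\<exists>x. poly p x = 0))"

definition normalized_3cocycle :: "('g, 'm) monoid_scheme \<Rightarrow> ('g \<Rightarrow> 'g \<Rightarrow> 'g \<Rightarrow> 'k::field) \<Rightarrow> bool" where
  "normalized_3cocycle G \<Phi> \<longleftrightarrow>
     (\<forall>x\<in>carrier G. \<forall>y\<in>carrier G. \<forall>z\<in>carrier G. \<Phi> x y z \<noteq> 0) \<and>
     (\<forall>a\<in>carrier G. \<forall>b\<in>carrier G. \<forall>c\<in>carrier G. \<forall>d\<in>carrier G.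
        \<Phi> b c d * \<Phi> a (b \<otimes>\<^bsub>G\<^esub> c) d * \<Phi> a b c
        = \<Phi> (a \<otimes>\<^bsub>G\<^esub> b) c d * \<Phi> a b (c \<otimes>\<^bsub>G\<^esub> d)) \<and>
     (\<forall>x\<in>carrier G. \<forall>y\<in>carrier G.
        \<Phi> \<one>\<^bsub>G\<^esub> x y = 1 \<and> \<Phi> x \<one>\<^bsub>G\<^esub> y = 1 \<and> \<Phi> x y \<one>\<^bsub>G\<^esub> = 1)"

definition Phi_tilde :: "('g \<Rightarrow> 'g \<Rightarrow> 'g \<Rightarrow> 'k::field) \<Rightarrow> 'g \<Rightarrow> 'g \<Rightarrow> 'g \<Rightarrow> 'k" where
  "Phi_tilde \<Phi> g x y = \<Phi> g x y * \<Phi> x y g / \<Phi> x g y"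

text \<open>An object of the category YD^Phi: a k-vector space V (a subspace of the ambient
  k-vector space 'v, with scalar multiplication scale), a G-grading V = (+)_g V_g given by
  grade, and linear operators act e (e in G) preserving each V_g, with act 1 = id and
  act e (act f v) = Phi~_g(e,f) (act (ef) v) for v in V_g.\<close>
definition yd_object ::
  "('g, 'm) monoid_scheme \<Rightarrow> ('g \<Rightarrow> 'g \<Rightarrow> 'g \<Rightarrow> 'k::field) \<Rightarrow> ('k \<Rightarrow> 'v::ab_group_add \<Rightarrow> 'v)
     \<Rightarrow> 'v set \<Rightarrow> ('g \<Rightarrow> 'v set) \<Rightarrow> ('g \<Rightarrow> 'v \<Rightarrow> 'v) \<Rightarrow> bool" where
  "yd_object G \<Phi> scale V grade act \<longleftrightarrow>
     vector_space scale \<and> module.subspace scale V \<and>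
     (\<forall>g\<in>carrier G. module.subspace scale (grade g) \<and> grade g \<subseteq> V) \<and>
     (\<forall>v\<in>V. \<exists>!f. (\<forall>g\<in>carrier G. f g \<in> grade g) \<and> (\<forall>g. g \<notin> carrier G \<longrightarrow> f g = 0)
                 \<and> v = (\<Sum>g\<in>carrier G. f g)) \<and>
     (\<forall>e\<in>carrier G. \<forall>x\<in>V. \<forall>y\<in>V. act e (x + y) = act e x + act e y) \<and>
     (\<forall>e\<in>carrier G. \<forall>c. \<forall>x\<in>V. act e (scale c x) = scale c (act e x)) \<and>
     (\<forall>e\<in>carrier G. \<forall>g\<in>carrier G. \<forall>v\<in>grade g. act e v \<in> grade g) \<and>
     (\<forall>v\<in>V. act \<one>\<^bsub>G\<^esub> v = v) \<and>
     (\<forall>g\<in>carrier G. \<forall>e\<in>carrier G. \<forall>f\<in>carrier G. \<forall>v\<in>grade g.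
        act e (act f v) = scale (Phi_tilde \<Phi> g e f) (act (e \<otimes>\<^bsub>G\<^esub> f) v))"

definition yd_subobject ::
  "('g, 'm) monoid_scheme \<Rightarrow> ('k::field \<Rightarrow> 'v::ab_group_add \<Rightarrow> 'v)
     \<Rightarrow> 'v set \<Rightarrow> ('g \<Rightarrow> 'v set) \<Rightarrow> ('g \<Rightarrow> 'v \<Rightarrow> 'v) \<Rightarrow> 'v set \<Rightarrow> bool" where
  "yd_subobject G scale V grade act W \<longleftrightarrow>
     module.subspace scale W \<and> W \<subseteq> V \<and>
     (\<forall>w\<in>W. \<forall>g\<in>carrier G. \<forall>f. ((\<forall>h\<in>carrier G. f h \<in> grade h) \<and> w = (\<Sum>h\<in>carrier G. f h))
            \<longrightarrow> f g \<in> W) \<and>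
     (\<forall>e\<in>carrier G. \<forall>w\<in>W. act e w \<in> W)"

definition yd_simple ::
  "('g, 'm) monoid_scheme \<Rightarrow> ('g \<Rightarrow> 'g \<Rightarrow> 'g \<Rightarrow> 'k::field) \<Rightarrow> ('k \<Rightarrow> 'v::ab_group_add \<Rightarrow> 'v)
     \<Rightarrow> 'v set \<Rightarrow> ('g \<Rightarrow> 'v set) \<Rightarrow> ('g \<Rightarrow> 'v \<Rightarrow> 'v) \<Rightarrow> bool" where
  "yd_simple G \<Phi> scale V grade act \<longleftrightarrow>
     yd_object G \<Phi> scale V grade act \<and> V \<noteq> {0} \<and>
     (\<forall>W. yd_subobject G scale V grade act W \<longrightarrow> W = {0} \<or> W = V)"

text \<open>Phi is abelian: every simple object of YD^Phi is 1-dimensional. Objects are taken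
  in an arbitrary ambient type 'v (the type variable is universally quantified).\<close>
definition abelian_cocycle ::
  "('g, 'm) monoid_scheme \<Rightarrow> ('g \<Rightarrow> 'g \<Rightarrow> 'g \<Rightarrow> 'k::field) \<Rightarrow> 'v::ab_group_add itself \<Rightarrow> bool" where
  "abelian_cocycle G \<Phi> _ \<longleftrightarrow>
     (\<forall>(scale :: 'k \<Rightarrow> 'v \<Rightarrow> 'v) V grade act. yd_simple G \<Phi> scale V grade act \<longrightarrow>
        (\<exists>v\<in>V. v \<noteq> 0 \<and> V = {scale c v | c. True}))"

end

theory Submission
  imports Defs "HOL-Algebra.FiniteProduct"
begin

text \<open>
  Pick \<open>a, b\<close> such that every element of \<open>G\<close> is \<open>a\<^sup>i b\<^sup>j\<close>. For an abelian group, six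
  instances of the cocycle condition give
  \<open>\<Phi>~\<^sub>g(x,y) \<Phi>~\<^sub>h(x,y) \<Phi>~\<^sub>x(g,h) \<Phi>~\<^sub>y(g,h) = \<Phi>~\<^sub>g\<^sub>h(x,y) \<Phi>~\<^sub>x\<^sub>y(g,h)\<close>,
  so the set of \<open>g\<close> with \<open>\<Phi>~\<^sub>g(a,b) = \<Phi>~\<^sub>g(b,a)\<close> is closed under multiplication; it
  contains \<open>1, a, b\<close>, hence all of \<open>G\<close>.
  A simple object is concentrated in a single degree \<open>g\<close>, where this symmetry makes the
  operators of \<open>a\<close> and \<open>b\<close> commute. Their \<open>|G|\<close>-th powers are scalars, so over an algebraically
  closed field they have a common eigenvector \<open>u\<close>. Every \<open>a\<^sup>i b\<^sup>j\<close> then acts on \<open>u\<close> by a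
  scalar, so the line through \<open>u\<close> is a subobject, and by simplicity it is everything.
\<close>

section \<open>Groups generated by powers of two elements\<close>

definition generated_by_powers :: "('a, 'b) monoid_scheme \<Rightarrow> 'a \<Rightarrow> 'a \<Rightarrow> bool" where
  "generated_by_powers G a b \<longleftrightarrow> a \<in> carrier G \<and> b \<in> carrier G \<and>
     (\<forall>e\<in>carrier G. \<exists>(i::nat) (j::nat). e = a [^]\<^bsub>G\<^esub> i \<otimes>\<^bsub>G\<^esub> b [^]\<^bsub>G\<^esub> j)"

lemma (in monoid) generated_by_powers_induct:
  assumes "generated_by_powers G a b" "e \<in> carrier G"
    and "P \<one>" "P a" "P b"
    and mult: "\<And>x y. x \<in> carrier G \<Longrightarrow> y \<in> carrier G \<Longrightarrow> P x \<Longrightarrow> P y \<Longrightarrow> P (x \<otimes> y)"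
  shows "P e"
proof -
  have ab: "a \<in> carrier G" "b \<in> carrier G"
    using assms(1) by (auto simp: generated_by_powers_def)
  have pow: "P (x [^] n)" if "x \<in> carrier G" "P x" for x and n :: nat
    by (induction n) (use that assms(3) mult in auto)
  obtain i j :: nat where "e = a [^] i \<otimes> b [^] j"
    using assms(1,2) by (auto simp: generated_by_powers_def)
  then show ?thesis
    using mult pow ab assms(4,5) by simp
qed

lemma generated_by_powers_iso:
  assumes "group G" "group H" "\<psi> \<in> iso H G" "generated_by_powers H a b"
  shows "generated_by_powers G (\<psi> a) (\<psi> b)"
proof -
  have hom: "\<psi> \<in> hom H G" and onto: "\<psi> ` carrier H = carrier G"
    using assms(3) by (auto simp: iso_def bij_betw_def)
  have ab: "a \<in> carrier H" "b \<in> carrier H"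
    using assms(4) by (auto simp: generated_by_powers_def)
  show ?thesis
    unfolding generated_by_powers_def
  proof (intro conjI ballI)
    show "\<psi> a \<in> carrier G" "\<psi> b \<in> carrier G"
      using hom ab by (auto simp: hom_in_carrier)
    fix e assume "e \<in> carrier G"
    then obtain h where h: "h \<in> carrier H" "e = \<psi> h"
      using onto by blast
    obtain i j :: nat where "h = a [^]\<^bsub>H\<^esub> i \<otimes>\<^bsub>H\<^esub> b [^]\<^bsub>H\<^esub> j"
      using assms(4) h(1) by (auto simp: generated_by_powers_def)
    then have "e = \<psi> a [^]\<^bsub>G\<^esub> i \<otimes>\<^bsub>G\<^esub> \<psi> b [^]\<^bsub>G\<^esub> j"
      using h(2) hom ab assms(1,2)
      by (simp add: hom_mult hom_nat_pow group.is_monoid monoid.nat_pow_closed)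
    then show "\<exists>(i::nat) (j::nat). e = \<psi> a [^]\<^bsub>G\<^esub> i \<otimes>\<^bsub>G\<^esub> \<psi> b [^]\<^bsub>G\<^esub> j"
      by blast
  qed
qed

lemma integer_mod_group_pow_one:
  assumes "n \<noteq> 0" "h \<in> carrier (integer_mod_group n)"
  shows "(1 mod int n) [^]\<^bsub>integer_mod_group n\<^esub> nat h = h"
  using assms by (simp add: carrier_integer_mod_group mod_mult_right_eq)

lemma generated_by_powers_integer_mod_group:
  assumes "n \<noteq> 0"
  shows "generated_by_powers (integer_mod_group n) (1 mod int n) 0"
proof -
  have "1 mod int n \<in> carrier (integer_mod_group n)"
    using assms by (simp add: carrier_integer_mod_group)
  then show ?thesis
    unfolding generated_by_powers_def
  proof (intro conjI ballI integer_mod_group_0)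
    fix h assume h: "h \<in> carrier (integer_mod_group n)"
    have pow: "h = (1 mod int n) [^]\<^bsub>integer_mod_group n\<^esub> nat h \<otimes>\<^bsub>integer_mod_group n\<^esub>
            0 [^]\<^bsub>integer_mod_group n\<^esub> (0::nat)"
      using integer_mod_group_pow_one[OF assms h] h assms by (simp add: carrier_integer_mod_group)
    show "\<exists>(i::nat) (j::nat). h = (1 mod int n) [^]\<^bsub>integer_mod_group n\<^esub> i \<otimes>\<^bsub>integer_mod_group n\<^esub>
            0 [^]\<^bsub>integer_mod_group n\<^esub> j"
      by (intro exI) (rule pow)
  qed
qed

lemma DirProd_nat_pow:
  assumes "monoid G" "monoid H"
  shows "(x, y) [^]\<^bsub>G \<times>\<times> H\<^esub> (k::nat) = (x [^]\<^bsub>G\<^esub> k, y [^]\<^bsub>H\<^esub> k)"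
  by (induction k) auto

lemma generated_by_powers_integer_mod_group_DirProd:
  assumes "m \<noteq> 0" "n \<noteq> 0"
  shows "generated_by_powers (integer_mod_group m \<times>\<times> integer_mod_group n)
           (1 mod int m, 0) (0, 1 mod int n)"
proof -
  let ?Z = integer_mod_group
  have "\<exists>(i::nat) (j::nat). h = (1 mod int m, 0) [^]\<^bsub>?Z m \<times>\<times> ?Z n\<^esub> i
          \<otimes>\<^bsub>?Z m \<times>\<times> ?Z n\<^esub> (0, 1 mod int n) [^]\<^bsub>?Z m \<times>\<times> ?Z n\<^esub> j"
    if "h \<in> carrier (?Z m \<times>\<times> ?Z n)" for h
    using that integer_mod_group_pow_one[OF assms(1)] integer_mod_group_pow_one[OF assms(2)]
    by (intro exI[of _ "nat (fst h)"] exI[of _ "nat (snd h)"])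
       (auto simp: DirProd_nat_pow group.is_monoid carrier_integer_mod_group assms)
  then show ?thesis
    using assms by (auto simp: generated_by_powers_def carrier_integer_mod_group)
qed

lemma finite_integer_mod_group_nonzero:
  "finite (carrier (integer_mod_group n)) \<Longrightarrow> n \<noteq> 0"
  by (cases "n = 0") (auto simp: carrier_integer_mod_group infinite_UNIV_int)

lemma generated_by_powers_if_cyclic_or_bicyclic:
  assumes G: "group G" "finite (carrier G)"
    and "(\<exists>n. G \<cong> integer_mod_group n) \<or> (\<exists>m n. G \<cong> integer_mod_group m \<times>\<times> integer_mod_group n)"
  shows "\<exists>a b. generated_by_powers G a b"
proof -
  have transfer: "\<exists>a b. generated_by_powers G a b"
    if "group H" "G \<cong> H" "finite (carrier H) \<Longrightarrow> \<exists>a b. generated_by_powers H a b"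
    for H :: "('c, 'd) monoid_scheme"
  proof -
    obtain \<psi> where \<psi>: "\<psi> \<in> iso H G"
      using group.iso_sym[OF G(1) \<open>G \<cong> H\<close>] by (auto simp: is_iso_def)
    then have "finite (carrier H)"
      using G(2) by (auto simp: iso_def bij_betw_finite)
    then show ?thesis
      using that(3) generated_by_powers_iso[OF G(1) \<open>group H\<close> \<psi>] by blast
  qed
  show ?thesis
    using assms(3)
  proof (elim disjE exE)
    fix n assume "G \<cong> integer_mod_group n"
    then show ?thesis
      by (rule transfer[OF group_integer_mod_group])
         (rule exI, rule exI, rule generated_by_powers_integer_mod_group[OF finite_integer_mod_group_nonzero])
  next
    fix m n assume "G \<cong> integer_mod_group m \<times>\<times> integer_mod_group n"
    then show ?thesis
    proof (rule transfer[OF DirProd_group[OF group_integer_mod_group group_integer_mod_group]])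
      assume "finite (carrier (integer_mod_group m \<times>\<times> integer_mod_group n))"
      then have fin: "finite (carrier (integer_mod_group m) \<times> carrier (integer_mod_group n))"
        by simp
      have ne: "carrier (integer_mod_group k) \<noteq> {}" for k
        using integer_mod_group_0 by blast
      have "m \<noteq> 0" "n \<noteq> 0"
        by (rule finite_integer_mod_group_nonzero, rule finite_cartesian_productD1[OF fin ne],
            rule finite_integer_mod_group_nonzero, rule finite_cartesian_productD2[OF fin ne])
      then show "\<exists>a b. generated_by_powers (integer_mod_group m \<times>\<times> integer_mod_group n) a b"
        by (intro exI) (rule generated_by_powers_integer_mod_group_DirProd)
    qed
  qed
qed

section \<open>A symmetry of \<open>Phi_tilde\<close> on abelian groups\<close>

lemma normalized_3cocycle_nonzero:
  "normalized_3cocycle G \<Phi> \<Longrightarrow> x \<in> carrier G \<Longrightarrow> y \<in> carrier G \<Longrightarrow> z \<in> carrier G \<Longrightarrow> \<Phi> x y z \<noteq> 0"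
  unfolding normalized_3cocycle_def by blast

lemma normalized_3cocycle_eq:
  "normalized_3cocycle G \<Phi> \<Longrightarrow> a \<in> carrier G \<Longrightarrow> b \<in> carrier G \<Longrightarrow> c \<in> carrier G \<Longrightarrow> d \<in> carrier G \<Longrightarrow>
    \<Phi> b c d * \<Phi> a (b \<otimes>\<^bsub>G\<^esub> c) d * \<Phi> a b c = \<Phi> (a \<otimes>\<^bsub>G\<^esub> b) c d * \<Phi> a b (c \<otimes>\<^bsub>G\<^esub> d)"
  unfolding normalized_3cocycle_def by blast

lemma Phi_tilde_nonzero:
  "normalized_3cocycle G \<Phi> \<Longrightarrow> g \<in> carrier G \<Longrightarrow> x \<in> carrier G \<Longrightarrow> y \<in> carrier G \<Longrightarrow>
    Phi_tilde \<Phi> g x y \<noteq> 0"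
  by (simp add: Phi_tilde_def normalized_3cocycle_nonzero)

lemma Phi_tilde_one:
  "normalized_3cocycle G \<Phi> \<Longrightarrow> x \<in> carrier G \<Longrightarrow> y \<in> carrier G \<Longrightarrow> Phi_tilde \<Phi> \<one>\<^bsub>G\<^esub> x y = 1"
  by (simp add: Phi_tilde_def normalized_3cocycle_def)

context comm_group
begin

text \<open>Each of the six quotients is the cocycle condition at a permutation of \<open>(g, h, x, y)\<close>.\<close>

lemma Phi_tilde_product_identity:
  fixes \<Phi> :: "'a \<Rightarrow> 'a \<Rightarrow> 'a \<Rightarrow> 'k::field"
  assumes \<Phi>: "normalized_3cocycle G \<Phi>"
    and G: "g \<in> carrier G" "h \<in> carrier G" "x \<in> carrier G" "y \<in> carrier G"
  shows "Phi_tilde \<Phi> g x y * Phi_tilde \<Phi> h x y * Phi_tilde \<Phi> x g h * Phi_tilde \<Phi> y g h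
       = Phi_tilde \<Phi> (g \<otimes> h) x y * Phi_tilde \<Phi> (x \<otimes> y) g h"
proof -
  note nz = normalized_3cocycle_nonzero[OF \<Phi>]
  have "Phi_tilde \<Phi> g x y * Phi_tilde \<Phi> h x y * Phi_tilde \<Phi> x g h * Phi_tilde \<Phi> y g h
       = Phi_tilde \<Phi> (g \<otimes> h) x y * Phi_tilde \<Phi> (x \<otimes> y) g h *
         ((\<Phi> h x y * \<Phi> g (h \<otimes> x) y * \<Phi> g h x) / (\<Phi> (g \<otimes> h) x y * \<Phi> g h (x \<otimes> y))) *
         ((\<Phi> (g \<otimes> x) h y * \<Phi> g x (h \<otimes> y)) / (\<Phi> x h y * \<Phi> g (x \<otimes> h) y * \<Phi> g x h)) *
         ((\<Phi> x y h * \<Phi> g (x \<otimes> y) h * \<Phi> g x y) / (\<Phi> (g \<otimes> x) y h * \<Phi> g x (y \<otimes> h))) *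
         ((\<Phi> g h y * \<Phi> x (g \<otimes> h) y * \<Phi> x g h) / (\<Phi> (x \<otimes> g) h y * \<Phi> x g (h \<otimes> y))) *
         ((\<Phi> (x \<otimes> g) y h * \<Phi> x g (y \<otimes> h)) / (\<Phi> g y h * \<Phi> x (g \<otimes> y) h * \<Phi> x g y)) *
         ((\<Phi> y g h * \<Phi> x (y \<otimes> g) h * \<Phi> x y g) / (\<Phi> (x \<otimes> y) g h * \<Phi> x y (g \<otimes> h)))"
    using G by (simp add: Phi_tilde_def nz m_comm field_simps)
  also have "\<dots> = Phi_tilde \<Phi> (g \<otimes> h) x y * Phi_tilde \<Phi> (x \<otimes> y) g h"
    using G by (simp add: normalized_3cocycle_eq[OF \<Phi>] nz)
  finally show ?thesis .
qed

lemma Phi_tilde_symmetric_mult: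
  fixes \<Phi> :: "'a \<Rightarrow> 'a \<Rightarrow> 'a \<Rightarrow> 'k::field"
  assumes \<Phi>: "normalized_3cocycle G \<Phi>"
    and G: "g \<in> carrier G" "h \<in> carrier G" "x \<in> carrier G" "y \<in> carrier G"
    and sym: "Phi_tilde \<Phi> g x y = Phi_tilde \<Phi> g y x" "Phi_tilde \<Phi> h x y = Phi_tilde \<Phi> h y x"
  shows "Phi_tilde \<Phi> (g \<otimes> h) x y = Phi_tilde \<Phi> (g \<otimes> h) y x"
proof -
  have "Phi_tilde \<Phi> (g \<otimes> h) x y * Phi_tilde \<Phi> (x \<otimes> y) g h
      = Phi_tilde \<Phi> (g \<otimes> h) y x * Phi_tilde \<Phi> (x \<otimes> y) g h"
    using Phi_tilde_product_identity[OF \<Phi> G] Phi_tilde_product_identity[OF \<Phi> G(1,2,4,3)]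
    by (simp add: sym m_comm[OF G(3,4)] mult_ac)
  then show ?thesis
    using Phi_tilde_nonzero[OF \<Phi>] G by simp
qed

lemma Phi_tilde_symmetric_on_generators:
  fixes \<Phi> :: "'a \<Rightarrow> 'a \<Rightarrow> 'a \<Rightarrow> 'k::field"
  assumes \<Phi>: "normalized_3cocycle G \<Phi>" and gen: "generated_by_powers G a b" and g: "g \<in> carrier G"
  shows "Phi_tilde \<Phi> g a b = Phi_tilde \<Phi> g b a"
proof -
  have ab: "a \<in> carrier G" "b \<in> carrier G"
    using gen by (auto simp: generated_by_powers_def)
  show ?thesis
    using gen g
  proof (rule generated_by_powers_induct)
    show "Phi_tilde \<Phi> \<one> a b = Phi_tilde \<Phi> \<one> b a"
      using Phi_tilde_one[OF \<Phi>] ab by simp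
    show "Phi_tilde \<Phi> a a b = Phi_tilde \<Phi> a b a" "Phi_tilde \<Phi> b a b = Phi_tilde \<Phi> b b a"
      using ab by (auto simp: Phi_tilde_def normalized_3cocycle_nonzero[OF \<Phi>])
  qed (use Phi_tilde_symmetric_mult[OF \<Phi> _ _ ab] in blast)
qed

end

section \<open>Eigenvectors of operators with a scalar power\<close>

locale linear_endomorphism_on = vector_space scale
  for scale :: "'k::field \<Rightarrow> 'v::ab_group_add \<Rightarrow> 'v" +
  fixes U :: "'v set" and L :: "'v \<Rightarrow> 'v"
  assumes subspace_U: "subspace U"
    and L_closed: "u \<in> U \<Longrightarrow> L u \<in> U"
    and L_add: "u \<in> U \<Longrightarrow> w \<in> U \<Longrightarrow> L (u + w) = L u + L w"
    and L_scale: "u \<in> U \<Longrightarrow> L (scale c u) = scale c (L u)"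
begin

definition poly_apply :: "'k poly \<Rightarrow> 'v \<Rightarrow> 'v" where
  "poly_apply p u = (\<Sum>i\<le>degree p. scale (coeff p i) ((L ^^ i) u))"

lemma funpow_L_closed: "u \<in> U \<Longrightarrow> (L ^^ i) u \<in> U"
  by (induction i) (auto intro: L_closed)

lemma L_zero: "L 0 = 0"
  using L_add[OF subspace_0 subspace_0, OF subspace_U subspace_U] by simp

lemma L_sum: "(\<And>i. i \<in> A \<Longrightarrow> f i \<in> U) \<Longrightarrow> L (sum f A) = (\<Sum>i\<in>A. L (f i))"
  by (induction A rule: infinite_finite_induct) (auto simp: L_zero L_add subspace_sum[OF subspace_U])

lemma poly_apply_closed: "u \<in> U \<Longrightarrow> poly_apply p u \<in> U"
  unfolding poly_apply_def
  by (intro subspace_sum[OF subspace_U] subspace_scale[OF subspace_U] funpow_L_closed)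

lemma poly_apply_eq_sum: "degree p < n \<Longrightarrow> poly_apply p u = (\<Sum>i<n. scale (coeff p i) ((L ^^ i) u))"
  unfolding poly_apply_def by (rule sum.mono_neutral_left) (auto simp: coeff_eq_0)

lemma poly_apply_add: "poly_apply (p + q) u = poly_apply p u + poly_apply q u"
  using degree_add_le_max[of p q]
  by (simp add: poly_apply_eq_sum[where n = "Suc (max (degree p) (degree q))"]
      scale_left_distrib sum.distrib del: sum.lessThan_Suc)

lemma poly_apply_smult: "poly_apply (smult c p) u = scale c (poly_apply p u)"
  using degree_smult_le[of c p]
  by (simp add: poly_apply_eq_sum[where n = "Suc (degree p)"] scale_sum_right del: sum.lessThan_Suc)

lemma poly_apply_const: "poly_apply [:c:] u = scale c u"
  by (simp add: poly_apply_def)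

lemma poly_apply_pCons_0:
  assumes u: "u \<in> U"
  shows "poly_apply (pCons 0 q) u = L (poly_apply q u)"
proof -
  define n where "n = Suc (degree q)"
  have "poly_apply (pCons 0 q) u = (\<Sum>i<Suc n. scale (coeff (pCons 0 q) i) ((L ^^ i) u))"
    by (rule poly_apply_eq_sum) (simp add: n_def degree_pCons_le Suc_le_lessD)
  also have "\<dots> = (\<Sum>i<n. L (scale (coeff q i) ((L ^^ i) u)))"
    unfolding sum.lessThan_Suc_shift by (simp add: L_scale funpow_L_closed u)
  also have "\<dots> = L (poly_apply q u)"
    using u by (simp add: L_sum poly_apply_eq_sum[where n = n] n_def subspace_scale[OF subspace_U]
        funpow_L_closed del: sum.lessThan_Suc)
  finally show ?thesis .
qed

lemma poly_apply_monom: "u \<in> U \<Longrightarrow> poly_apply (monom 1 n) u = (L ^^ n) u"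
  by (induction n) (simp_all add: monom_0 poly_apply_const monom_Suc poly_apply_pCons_0)

text \<open>Write \<open>p = (X - r) q\<close> for a root \<open>r\<close> of \<open>p\<close>. Then \<open>w = q(L) u\<close> satisfies \<open>L w = r w\<close>,
  and if \<open>w = 0\<close> the quotient \<open>q\<close> is an annihilator of smaller degree.\<close>

lemma eigenvector_if_annihilated:
  assumes "alg_closed_field TYPE('k)" "p \<noteq> 0" "u \<in> U" "u \<noteq> 0" "poly_apply p u = 0"
  shows "\<exists>w\<in>U. w \<noteq> 0 \<and> (\<exists>c. L w = scale c w)"
  using assms(2-)
proof (induction "degree p" arbitrary: p rule: less_induct)
  case less
  show ?case
  proof (cases "degree p = 0")
    case True
    then obtain c where "p = [:c:]" by (metis degree_eq_zeroE)
    with less.prems show ?thesis by (simp add: poly_apply_const)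
  next
    case False
    then obtain r where "poly p r = 0"
      using assms(1) False unfolding alg_closed_field_def by (meson less_one not_le)
    then have pq: "p + smult r (synthetic_div p r) = pCons 0 (synthetic_div p r)"
      using synthetic_div_correct[of p r] by simp
    define w where "w = poly_apply (synthetic_div p r) u"
    have "L w = scale r w"
      using arg_cong[OF pq, of "\<lambda>p. poly_apply p u"] less.prems
      by (simp add: poly_apply_add poly_apply_smult poly_apply_pCons_0 w_def)
    moreover have "w \<in> U"
      using less.prems by (simp add: w_def poly_apply_closed)
    moreover have "\<exists>w\<in>U. w \<noteq> 0 \<and> (\<exists>c. L w = scale c w)" if "w = 0"
    proof (rule less.hyps)
      show "degree (synthetic_div p r) < degree p"
        using False by (simp add: degree_synthetic_div)
      show "synthetic_div p r \<noteq> 0"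
        using pq less.prems(1) by auto
    qed (use less.prems that w_def in auto)
    ultimately show ?thesis by blast
  qed
qed

lemma eigenvector_if_power_scalar:
  assumes "alg_closed_field TYPE('k)" "N \<ge> 1"
    and pow: "\<And>u. u \<in> U \<Longrightarrow> (L ^^ N) u = scale s u"
    and "u \<in> U" "u \<noteq> 0"
  shows "\<exists>w\<in>U. w \<noteq> 0 \<and> (\<exists>c. L w = scale c w)"
proof (rule eigenvector_if_annihilated)
  let ?p = "[:-s:] + pCons 0 (monom 1 (N - 1))"
  have "poly_apply ?p u = scale (-s) u + L ((L ^^ (N - 1)) u)"
    using \<open>u \<in> U\<close> by (simp only: poly_apply_add poly_apply_const poly_apply_pCons_0 poly_apply_monom)
  also have "L ((L ^^ (N - 1)) u) = (L ^^ N) u"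
    using \<open>N \<ge> 1\<close> by (metis Suc_diff_le diff_Suc_1 funpow.simps(2) o_apply)
  finally show "poly_apply ?p u = 0"
    using pow[OF \<open>u \<in> U\<close>] by simp
  have "coeff ?p N = 1"
    using \<open>N \<ge> 1\<close> by (cases N) (simp_all add: coeff_pCons)
  then show "?p \<noteq> 0"
    by auto
qed (use assms in auto)

end

section \<open>Simple objects over a two-generated abelian group\<close>

locale yd_module =
  fixes G :: "('g, 'm) monoid_scheme" and \<Phi> :: "'g \<Rightarrow> 'g \<Rightarrow> 'g \<Rightarrow> 'k::field"
    and scale :: "'k \<Rightarrow> 'v::ab_group_add \<Rightarrow> 'v" and V :: "'v set"
    and grade :: "'g \<Rightarrow> 'v set" and act :: "'g \<Rightarrow> 'v \<Rightarrow> 'v"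
  assumes yd_object: "yd_object G \<Phi> scale V grade act"
begin

sublocale vector_space scale
  using yd_object by (simp add: yd_object_def)

lemma subspace_V: "subspace V"
  using yd_object by (simp add: yd_object_def)

lemma subspace_grade: "g \<in> carrier G \<Longrightarrow> subspace (grade g)"
  using yd_object by (simp add: yd_object_def)

lemma grade_subset: "g \<in> carrier G \<Longrightarrow> grade g \<subseteq> V"
  using yd_object by (simp add: yd_object_def)

lemma grade_decomposition:
  "v \<in> V \<Longrightarrow> \<exists>!f. (\<forall>g\<in>carrier G. f g \<in> grade g) \<and> (\<forall>g. g \<notin> carrier G \<longrightarrow> f g = 0)
                  \<and> v = (\<Sum>g\<in>carrier G. f g)"
  using yd_object by (simp add: yd_object_def)

lemma act_add: "e \<in> carrier G \<Longrightarrow> x \<in> V \<Longrightarrow> y \<in> V \<Longrightarrow> act e (x + y) = act e x + act e y"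
  using yd_object by (simp add: yd_object_def)

lemma act_scale: "e \<in> carrier G \<Longrightarrow> x \<in> V \<Longrightarrow> act e (scale c x) = scale c (act e x)"
  using yd_object by (simp add: yd_object_def)

lemma act_grade: "e \<in> carrier G \<Longrightarrow> g \<in> carrier G \<Longrightarrow> v \<in> grade g \<Longrightarrow> act e v \<in> grade g"
  using yd_object by (simp add: yd_object_def)

lemma act_one: "v \<in> V \<Longrightarrow> act \<one>\<^bsub>G\<^esub> v = v"
  using yd_object by (simp add: yd_object_def)

lemma act_act:
  "g \<in> carrier G \<Longrightarrow> e \<in> carrier G \<Longrightarrow> f \<in> carrier G \<Longrightarrow> v \<in> grade g \<Longrightarrow>
    act e (act f v) = scale (Phi_tilde \<Phi> g e f) (act (e \<otimes>\<^bsub>G\<^esub> f) v)"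
  using yd_object by (simp add: yd_object_def)

lemma homogeneous_components:
  assumes fin: "finite (carrier G)" and g: "g \<in> carrier G" and w: "w \<in> grade g"
    and f: "\<forall>h\<in>carrier G. f h \<in> grade h" "w = (\<Sum>h\<in>carrier G. f h)" and h: "h \<in> carrier G"
  shows "f h = (if h = g then w else 0)"
proof -
  let ?f = "\<lambda>h. if h \<in> carrier G then f h else 0" and ?\<delta> = "\<lambda>h. if h = g then w else 0"
  let ?P = "\<lambda>f. (\<forall>g\<in>carrier G. f g \<in> grade g) \<and> (\<forall>g. g \<notin> carrier G \<longrightarrow> f g = 0)
                  \<and> w = (\<Sum>g\<in>carrier G. f g)"
  have P_f: "?P ?f"
    using f by simp
  have P_\<delta>: "?P ?\<delta>"
    using g w fin subspace_0[OF subspace_grade] by auto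
  have "w \<in> V"
    using grade_subset[OF g] w by (rule subsetD)
  then have eq: "?f = ?\<delta>"
  proof (rule grade_decomposition[THEN ex1E])
    fix F assume unique: "\<forall>f. ?P f \<longrightarrow> f = F"
    show "?f = ?\<delta>"
      using unique[rule_format, OF P_f] unique[rule_format, OF P_\<delta>] by (rule trans[OF _ sym])
  qed
  show ?thesis
    using fun_cong[OF eq, of h] h by simp
qed

lemma yd_subobject_homogeneous:
  assumes "finite (carrier G)" "g \<in> carrier G" "subspace W" "W \<subseteq> grade g"
    and "\<And>e w. e \<in> carrier G \<Longrightarrow> w \<in> W \<Longrightarrow> act e w \<in> W"
  shows "yd_subobject G scale V grade act W"
  unfolding yd_subobject_def
proof (intro conjI ballI allI impI)
  show "W \<subseteq> V"
    using assms(2,4) grade_subset by blast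
  fix w h f
  assume w: "w \<in> W" and h: "h \<in> carrier G"
    and f: "(\<forall>h\<in>carrier G. f h \<in> grade h) \<and> w = (\<Sum>h\<in>carrier G. f h)"
  have "f h = (if h = g then w else 0)"
    using homogeneous_components[OF assms(1,2) _ conjunct1[OF f] conjunct2[OF f] h] w assms(4) by blast
  then show "f h \<in> W"
    using w subspace_0[OF assms(3)] by simp
qed (use assms in auto)

lemma simple_concentrated:
  assumes fin: "finite (carrier G)" and simple: "yd_simple G \<Phi> scale V grade act"
  shows "\<exists>g\<in>carrier G. grade g = V"
proof -
  obtain v where v: "v \<in> V" "v \<noteq> 0"
    using simple subspace_0[OF subspace_V] unfolding yd_simple_def by blast
  then obtain f where "\<forall>g\<in>carrier G. f g \<in> grade g" "v = (\<Sum>g\<in>carrier G. f g)"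
    using grade_decomposition by blast
  then obtain g where g: "g \<in> carrier G" "f g \<in> grade g" "f g \<noteq> 0"
    using v(2) sum.neutral by metis
  have "yd_subobject G scale V grade act (grade g)"
    using fin g(1) subspace_grade act_grade by (intro yd_subobject_homogeneous) auto
  then have "grade g = {0} \<or> grade g = V"
    using simple unfolding yd_simple_def by blast
  then show ?thesis
    using g by blast
qed

end

locale concentrated_yd_module = yd_module G \<Phi> scale V grade act + comm_group G
  for G :: "('g, 'm) monoid_scheme" (structure) and \<Phi> :: "'g \<Rightarrow> 'g \<Rightarrow> 'g \<Rightarrow> 'k::field"
    and scale :: "'k \<Rightarrow> 'v::ab_group_add \<Rightarrow> 'v" and V grade act +
  fixes g0 :: 'g
  assumes finite_carrier: "finite (carrier G)"
    and cocycle: "normalized_3cocycle G \<Phi>"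
    and g0: "g0 \<in> carrier G" and grade_g0: "grade g0 = V"
begin

lemma act_closed: "e \<in> carrier G \<Longrightarrow> v \<in> V \<Longrightarrow> act e v \<in> V"
  using act_grade g0 grade_g0 by blast

lemma act_twisted: "e \<in> carrier G \<Longrightarrow> f \<in> carrier G \<Longrightarrow> v \<in> V \<Longrightarrow>
    act e (act f v) = scale (Phi_tilde \<Phi> g0 e f) (act (e \<otimes> f) v)"
  using act_act g0 grade_g0 by blast

lemma linear_endomorphism_on_act: "e \<in> carrier G \<Longrightarrow> linear_endomorphism_on scale V (act e)"
  by unfold_locales (simp_all add: subspace_V act_closed act_add act_scale)

lemma funpow_act:
  assumes "x \<in> carrier G"
  shows "\<exists>c. \<forall>u\<in>V. (act x ^^ n) u = scale c (act (x [^] n) u)"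
proof (induction n)
  case 0
  show ?case
    by (rule exI[of _ 1]) (simp add: act_one)
next
  case (Suc n)
  then obtain c where c: "\<forall>u\<in>V. (act x ^^ n) u = scale c (act (x [^] n) u)" ..
  have "(act x ^^ Suc n) u = scale (c * Phi_tilde \<Phi> g0 x (x [^] n)) (act (x [^] Suc n) u)"
    if "u \<in> V" for u
    using that assms c act_closed
    by (simp add: act_scale act_twisted m_comm[of x])
  then show ?case by blast
qed

lemma funpow_act_card:
  assumes "x \<in> carrier G"
  shows "\<exists>s. \<forall>u\<in>V. (act x ^^ card (carrier G)) u = scale s u"
  using funpow_act[OF assms, of "card (carrier G)"] power_order_eq_one[OF finite_carrier assms]
  by (simp add: act_one)

lemma act_commute:
  assumes "x \<in> carrier G" "y \<in> carrier G" "Phi_tilde \<Phi> g0 x y = Phi_tilde \<Phi> g0 y x" "u \<in> V"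
  shows "act x (act y u) = act y (act x u)"
  using assms by (simp add: act_twisted m_comm)

lemma common_eigenvector:
  assumes ac: "alg_closed_field TYPE('k)" and "V \<noteq> {0}"
    and a: "a \<in> carrier G" and b: "b \<in> carrier G" and sym: "Phi_tilde \<Phi> g0 a b = Phi_tilde \<Phi> g0 b a"
  shows "\<exists>u\<in>V. u \<noteq> 0 \<and> (\<exists>c. act a u = scale c u) \<and> (\<exists>d. act b u = scale d u)"
proof -
  have N: "card (carrier G) \<ge> 1"
    using finite_carrier one_closed by (auto simp: Suc_le_eq card_gt_0_iff)
  obtain v where "v \<in> V" "v \<noteq> 0"
    using \<open>V \<noteq> {0}\<close> subspace_0[OF subspace_V] by blast
  then obtain w c where w: "w \<in> V" "w \<noteq> 0" "act a w = scale c w"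
    using linear_endomorphism_on.eigenvector_if_power_scalar[OF linear_endomorphism_on_act[OF a] ac N]
      funpow_act_card[OF a] by blast
  define E where "E = {u \<in> V. act a u = scale c u}"
  have E: "linear_endomorphism_on scale E (act b)"
  proof unfold_locales
    show "subspace E"
      using subspace_V act_add[OF a] act_scale[OF a]
        linear_endomorphism_on.L_zero[OF linear_endomorphism_on_act[OF a]]
      by (auto simp: E_def subspace_def scale_right_distrib scale_left_commute)
  qed (auto simp: E_def act_closed[OF b] act_commute[OF a b sym] act_scale act_add b)
  obtain s where "\<forall>u\<in>V. (act b ^^ card (carrier G)) u = scale s u"
    using funpow_act_card[OF b] ..
  then have "\<And>u. u \<in> E \<Longrightarrow> (act b ^^ card (carrier G)) u = scale s u"
    by (simp add: E_def)
  moreover have "w \<in> E"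
    using w by (simp add: E_def)
  ultimately obtain u where "u \<in> E" "u \<noteq> 0" "\<exists>d. act b u = scale d u"
    using linear_endomorphism_on.eigenvector_if_power_scalar[OF E ac N] w(2) by blast
  then show ?thesis
    unfolding E_def by blast
qed

lemma eigenvector_mult:
  assumes "x \<in> carrier G" "y \<in> carrier G" "u \<in> V" "act x u = scale c u" "act y u = scale d u"
  shows "\<exists>c'. act (x \<otimes> y) u = scale c' u"
proof -
  let ?t = "Phi_tilde \<Phi> g0 x y"
  have t: "?t \<noteq> 0"
    using Phi_tilde_nonzero[OF cocycle g0 assms(1,2)] .
  have "scale ?t (act (x \<otimes> y) u) = act x (act y u)"
    using act_twisted[OF assms(1-3)] by simp
  also have "\<dots> = scale (d * c) u"
    using assms by (simp add: act_scale)
  finally have "act (x \<otimes> y) u = scale (inverse ?t * (d * c)) u"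
    using t by (metis scale_scale left_inverse scale_one)
  then show ?thesis ..
qed

lemma eigenvector_of_generators:
  assumes gen: "generated_by_powers G a b" and u: "u \<in> V"
    and "act a u = scale c u" "act b u = scale d u" and e: "e \<in> carrier G"
  shows "\<exists>c. act e u = scale c u"
  using gen e
proof (rule generated_by_powers_induct)
  show "\<exists>c. act \<one> u = scale c u"
    using u by (metis act_one scale_one)
  show "\<exists>c. act (x \<otimes> y) u = scale c u"
    if "x \<in> carrier G" "y \<in> carrier G" "\<exists>c. act x u = scale c u" "\<exists>c. act y u = scale c u" for x y
    using that eigenvector_mult u by blast
qed (use assms in blast)+

lemma simple_is_line:
  assumes simple: "yd_simple G \<Phi> scale V grade act"
    and u: "u \<in> V" "u \<noteq> 0" and eigen: "\<And>e. e \<in> carrier G \<Longrightarrow> \<exists>c. act e u = scale c u"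
  shows "V = {scale c u | c. True}"
proof -
  have line: "{scale c u | c. True} = span {u}"
    by (auto simp: span_singleton)
  have "yd_subobject G scale V grade act {scale c u | c. True}"
  proof (rule yd_subobject_homogeneous[OF finite_carrier g0])
    show "subspace {scale c u | c. True}"
      unfolding line by (rule subspace_span)
    show "{scale c u | c. True} \<subseteq> grade g0"
      using u(1) grade_g0 subspace_scale[OF subspace_V] by auto
    show "act e w \<in> {scale c u | c. True}" if e: "e \<in> carrier G" and w: "w \<in> {scale c u | c. True}" for e w
    proof -
      obtain c where "w = scale c u"
        using w by blast
      moreover obtain d where "act e u = scale d u"
        using eigen[OF e] ..
      ultimately have "act e w = scale (c * d) u"
        using e u(1) by (simp add: act_scale)
      then show ?thesis by blast
    qed
  qed
  then have "{scale c u | c. True} = {0} \<or> {scale c u | c. True} = V"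
    using simple unfolding yd_simple_def by blast
  moreover have "u \<in> {scale c u | c. True}"
    by (metis (mono_tags, lifting) mem_Collect_eq scale_one)
  ultimately show ?thesis
    using u(2) by blast
qed

end

theorem proposition3p15:
  fixes G :: "'g monoid" and \<Phi> :: "'g \<Rightarrow> 'g \<Rightarrow> 'g \<Rightarrow> 'k::field_char_0"
  assumes "alg_closed_field TYPE('k)"
    and "comm_group G" and "finite (carrier G)"
    and "(\<exists>n. G \<cong> integer_mod_group n) \<or>
         (\<exists>m n. G \<cong> integer_mod_group m \<times>\<times> integer_mod_group n)"
    and "normalized_3cocycle G \<Phi>"
  shows "abelian_cocycle G \<Phi> TYPE('v::ab_group_add)"
  unfolding abelian_cocycle_def
proof (intro allI impI)
  fix scale :: "'k \<Rightarrow> 'v \<Rightarrow> 'v" and V grade act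
  assume simple: "yd_simple G \<Phi> scale V grade act"
  interpret yd_module G \<Phi> scale V grade act
    using simple by unfold_locales (simp add: yd_simple_def)
  obtain g where g: "g \<in> carrier G" "grade g = V"
    using simple_concentrated[OF assms(3) simple] by blast
  interpret concentrated_yd_module G \<Phi> scale V grade act g
    by (intro concentrated_yd_module.intro concentrated_yd_module_axioms.intro yd_module_axioms assms g)
  obtain a b where gen: "generated_by_powers G a b"
    using generated_by_powers_if_cyclic_or_bicyclic[OF is_group assms(3,4)] by blast
  then have ab: "a \<in> carrier G" "b \<in> carrier G"
    by (auto simp: generated_by_powers_def)
  obtain u where u: "u \<in> V" "u \<noteq> 0" and "\<exists>c. act a u = scale c u" "\<exists>d. act b u = scale d u"
    using common_eigenvector[OF assms(1) _ ab Phi_tilde_symmetric_on_generators[OF assms(5) gen g(1)]]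
      simple unfolding yd_simple_def by blast
  then have "V = {scale c u | c. True}"
    using simple_is_line[OF simple u] eigenvector_of_generators[OF gen u(1)] by blast
  then show "\<exists>v\<in>V. v \<noteq> 0 \<and> V = {scale c v | c. True}"
    using u by blast
qed

end
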